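(* Let $\{x_k\}$ be an infinite sequence generated by the Subgradient-InexP method (with any positive stepsizes $t_k$), under the standing assumptions, and let $\nu:=\frac{1+2\bar\gamma}{1-2\bar\lambda}$. Then for every $x\in C$ and every $k=0,1,\dots$, $$\|x_{k+1}-x\|^2\le\|x_k-x\|^2+\nu t_k^2\|s_k\|^2-2t_k\big[f(x_k)-f(x)-\epsilon_k\big].$$
   Context: Problem: minimize a convex function $f:\mathbb{R}^n\to\mathbb{R}$ over a nonempty closed convex set $C\subset\mathbb{R}^n$. For $\epsilon\ge0$, $\partial_\epsilon f(x):=\{s\in\mathbb{R}^n: f(y)\ge f(x)+\langle s,y-x\rangle-\epsilon\ \forall y\in\mathbb{R}^n\}$; $\partial f=\partial_0 f$. A relative error tolerance function with forcing parameters $\gamma,\theta,\lambda\ge0$ is any $\varphi_{\gamma,\theta,\lambda}:(\mathbb{R}^n)^3\to[0,\infty)$ with $\varphi_{\gamma,\theta,\lambda}(u,v,w)\le\gamma\|v-u\|^2+\theta\|w-v\|^2+\lambda\|w-u\|^2$. For $u\in C$, $\mathcal{P}_C(\varphi_{\gamma,\theta,\lambda},u,v):=\{w\in C:\langle v-w,z-w\rangle\le\varphi_{\gamma,\theta,\lambda}(u,v,w)\ \forall z\in C\}$. Subgradient-InexP method: given nonnegative sequences $\{\epsilon_k\},\{\gamma_k\},\{\theta_k\},\{\lambda_k\}$ and $x_0\in C$, at iteration $k$: if $0\in\partial f(x_k)$ stop; otherwise choose a nonzero $s_k\in\partial_{\epsilon_k}f(x_k)$, a stepsize $t_k>0$,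 and any $x_{k+1}\in\mathcal{P}_C(\varphi_{\gamma_k,\theta_k,\lambda_k},x_k,x_k-t_ks_k)$ (for some relative error tolerance functions $\varphi_{\gamma_k,\theta_k,\lambda_k}$). Standing assumptions: there exist $\bar\gamma\ge0$ and $\bar\theta,\bar\lambda\in[0,1/2)$ with $\gamma_k\in[0,\bar\gamma)$, $\theta_k\in[0,\bar\theta)$, $\lambda_k\in[0,\bar\lambda)$ for all $k$, and the generated sequence is infinite. *)

theory Defs
  imports "HOL-Analysis.Analysis"
begin

definition eps_subdiff :: "('a::real_inner \<Rightarrow> real) \<Rightarrow> real \<Rightarrow> 'a \<Rightarrow> 'a set" where
  "eps_subdiff f eps x = {s. \<forall>y. f y \<ge> f x + inner s (y - x) - eps}"

definition rel_err_tol :: "real \<Rightarrow> real \<Rightarrow> real \<Rightarrow> ('a::real_normed_vector \<Rightarrow> 'a \<Rightarrow> 'a \<Rightarrow> real) \<Rightarrow> bool" where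
  "rel_err_tol gam th la phi \<longleftrightarrow>
     (\<forall>u v w. 0 \<le> phi u v w \<and>
        phi u v w \<le> gam * (norm (v - u))\<^sup>2 + th * (norm (w - v))\<^sup>2 + la * (norm (w - u))\<^sup>2)"

definition inexact_proj :: "'a::real_inner set \<Rightarrow> ('a \<Rightarrow> 'a \<Rightarrow> 'a \<Rightarrow> real) \<Rightarrow> 'a \<Rightarrow> 'a \<Rightarrow> 'a set" where
  "inexact_proj C phi u v = {w \<in> C. \<forall>z\<in>C. inner (v - w) (z - w) \<le> phi u v w}"

end

theory Submission
  imports Defs
begin

text \<open>The exact step \<open>v = x\<^sub>k - t\<^sub>k s\<^sub>k\<close> satisfies the classical subgradient estimate
  \<open>\<parallel>v - y\<parallel>\<^sup>2 \<le> \<parallel>x\<^sub>k - y\<parallel>\<^sup>2 + t\<^sub>k\<^sup>2\<parallel>s\<^sub>k\<parallel>\<^sup>2 - 2t\<^sub>k(f x\<^sub>k - f y - \<epsilon>\<^sub>k)\<close>. Replacing \<open>v\<close> by an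
  inexact projection \<open>w\<close> costs at most \<open>(\<nu> - 1)\<parallel>v - x\<^sub>k\<parallel>\<^sup>2\<close>: the tolerance inequality
  tested at \<open>z = y\<close> controls \<open>\<parallel>w - y\<parallel>\<^sup>2\<close> against \<open>\<parallel>v - y\<parallel>\<^sup>2\<close>, and tested at \<open>z = x\<^sub>k\<close> it
  bounds \<open>\<parallel>w - x\<^sub>k\<parallel>\<^sup>2\<close>, which is exactly the \<open>\<lambda>\<close>-term of the tolerance.\<close>

text \<open>The scalar core of the next lemma, with \<open>A = \<parallel>w - u\<parallel>\<^sup>2\<close>, \<open>B = \<parallel>v - u\<parallel>\<^sup>2\<close>,
  \<open>D = \<parallel>w - v\<parallel>\<^sup>2\<close>: solve the tolerance inequality for \<open>A\<close> and substitute.\<close>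

lemma relative_error_bound:
  fixes A B D g th l gb lb :: real
  assumes "0 \<le> A" "0 \<le> B" "0 \<le> D"
    and "0 \<le> g" "g \<le> gb" "0 \<le> th" "th \<le> 1/2" "0 \<le> l" "l \<le> lb" "lb < 1/2"
    and tested_at_u: "(A + D - B) / 2 \<le> g * B + th * D + l * A"
  shows "B - D + 2 * (g * B + th * D + l * A) \<le> ((1 + 2 * gb) / (1 - 2 * lb)) * B"
proof -
  define P where "P = (1 + 2 * g) * B - (1 - 2 * th) * D"
  have l_lt: "1 - 2 * l > 0" using assms by simp
  have "(1 - 2 * l) * A \<le> P" using tested_at_u unfolding P_def by (simp add: algebra_simps)
  then have A_le: "A \<le> P / (1 - 2 * l)" using l_lt by (simp add: le_divide_eq mult.commute)
  have "B - D + 2 * (g * B + th * D + l * A) = P + 2 * l * A"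
    unfolding P_def by (simp add: algebra_simps)
  also have "\<dots> \<le> P + 2 * l * (P / (1 - 2 * l))"
    using mult_left_mono[OF A_le, of "2 * l"] assms by simp
  also have "\<dots> = P / (1 - 2 * l)" using l_lt by (simp add: field_simps)
  also have "\<dots> \<le> (1 + 2 * g) * B / (1 - 2 * l)"
    using assms l_lt unfolding P_def by (intro divide_right_mono) auto
  also have "\<dots> \<le> (1 + 2 * gb) * B / (1 - 2 * lb)"
    using assms by (intro frac_le mult_right_mono) auto
  finally show ?thesis by simp
qed

lemma inexact_proj_dist_le:
  fixes u v w y :: "'a::real_inner"
  assumes phi: "rel_err_tol g th l phi"
    and w: "w \<in> inexact_proj C phi u v" and "u \<in> C" "y \<in> C"
    and "0 \<le> g" "g \<le> gb" "0 \<le> th" "th \<le> 1/2" "0 \<le> l" "l \<le> lb" "lb < 1/2"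
  shows "(norm (w - y))\<^sup>2
    \<le> (norm (v - y))\<^sup>2 - (norm (v - u))\<^sup>2 + ((1 + 2 * gb) / (1 - 2 * lb)) * (norm (v - u))\<^sup>2"
proof -
  let ?tol = "g * (norm (v - u))\<^sup>2 + th * (norm (w - v))\<^sup>2 + l * (norm (w - u))\<^sup>2"
  have tested: "inner (v - w) (z - w) \<le> ?tol" if "z \<in> C" for z
  proof -
    have "inner (v - w) (z - w) \<le> phi u v w"
      using w that unfolding inexact_proj_def by blast
    also have "\<dots> \<le> ?tol"
      using phi unfolding rel_err_tol_def by blast
    finally show ?thesis .
  qed
  have dist_w: "(norm (w - y))\<^sup>2 = (norm (v - y))\<^sup>2 - (norm (w - v))\<^sup>2 + 2 * inner (v - w) (y - w)"
    unfolding power2_norm_eq_inner by (simp add: inner_diff_left inner_diff_right inner_commute)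
  have polar: "inner (v - w) (u - w) = ((norm (w - u))\<^sup>2 + (norm (w - v))\<^sup>2 - (norm (v - u))\<^sup>2) / 2"
    unfolding power2_norm_eq_inner by (simp add: inner_diff_left inner_diff_right inner_commute)
  have "(norm (v - u))\<^sup>2 - (norm (w - v))\<^sup>2 + 2 * ?tol
      \<le> ((1 + 2 * gb) / (1 - 2 * lb)) * (norm (v - u))\<^sup>2"
  proof (rule relative_error_bound)
    show "((norm (w - u))\<^sup>2 + (norm (w - v))\<^sup>2 - (norm (v - u))\<^sup>2) / 2 \<le> ?tol"
      using tested[OF \<open>u \<in> C\<close>] polar by simp
  qed (use assms in auto)
  moreover have "2 * inner (v - w) (y - w) \<le> 2 * ?tol"
    using tested[OF \<open>y \<in> C\<close>] by simp
  ultimately show ?thesis unfolding dist_w by simp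
qed

lemma subgradient_step_dist_le:
  fixes u s y :: "'a::real_inner"
  assumes "s \<in> eps_subdiff f eps u" "0 \<le> t"
  shows "(norm (u - t *\<^sub>R s - y))\<^sup>2
    \<le> (norm (u - y))\<^sup>2 + t\<^sup>2 * (norm s)\<^sup>2 - 2 * t * (f u - f y - eps)"
proof -
  have "f y \<ge> f u + inner s (y - u) - eps" using assms(1) unfolding eps_subdiff_def by blast
  then have sub: "- inner s (u - y) \<le> f y - f u + eps" by (simp add: inner_diff_right)
  have "- 2 * t * inner s (u - y) \<le> - 2 * t * (f u - f y - eps)"
    using mult_left_mono[OF sub, of "2 * t"] assms(2) by (simp add: algebra_simps)
  moreover have "(norm (u - t *\<^sub>R s - y))\<^sup>2 = (norm (u - y))\<^sup>2 + t\<^sup>2 * (norm s)\<^sup>2 - 2 * t * inner s (u - y)"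
    unfolding power2_norm_eq_inner
    by (simp add: inner_diff_left inner_diff_right inner_commute power2_eq_square algebra_simps)
  ultimately show ?thesis by linarith
qed

theorem mainTheorem2:
  fixes f :: "'a::euclidean_space \<Rightarrow> real"
    and C :: "'a set"
    and x s :: "nat \<Rightarrow> 'a"
    and t eps gam th la :: "nat \<Rightarrow> real"
    and phi :: "nat \<Rightarrow> 'a \<Rightarrow> 'a \<Rightarrow> 'a \<Rightarrow> real"
    and gbar thbar labar :: real
  assumes f_convex: "convex_on UNIV f"
    and C_convex: "convex C" and C_closed: "closed C" and C_ne: "C \<noteq> {}"
    and x0: "x 0 \<in> C"
    and eps_nonneg: "\<And>k. eps k \<ge> 0"
    and gbar: "gbar \<ge> 0"
    and thbar: "0 \<le> thbar" "thbar < 1/2"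
    and labar: "0 \<le> labar" "labar < 1/2"
    and gam: "\<And>k. 0 \<le> gam k \<and> gam k < gbar"
    and th: "\<And>k. 0 \<le> th k \<and> th k < thbar"
    and la: "\<And>k. 0 \<le> la k \<and> la k < labar"
    and nostop: "\<And>k. 0 \<notin> eps_subdiff f 0 (x k)"
    and s_nz: "\<And>k. s k \<noteq> 0"
    and s_sub: "\<And>k. s k \<in> eps_subdiff f (eps k) (x k)"
    and t_pos: "\<And>k. t k > 0"
    and phi: "\<And>k. rel_err_tol (gam k) (th k) (la k) (phi k)"
    and step: "\<And>k. x (Suc k) \<in> inexact_proj C (phi k) (x k) (x k - t k *\<^sub>R s k)"
  shows "\<forall>y\<in>C. \<forall>k. (norm (x (Suc k) - y))\<^sup>2
           \<le> (norm (x k - y))\<^sup>2 + ((1 + 2 * gbar) / (1 - 2 * labar)) * (t k)\<^sup>2 * (norm (s k))\<^sup>2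
              - 2 * t k * (f (x k) - f y - eps k)"
proof (intro ballI allI)
  fix y k assume "y \<in> C"
  have "x k \<in> C"
    using x0 step[of "k - 1"] by (cases k) (auto simp: inexact_proj_def)
  then have "(norm (x (Suc k) - y))\<^sup>2 \<le> (norm (x k - t k *\<^sub>R s k - y))\<^sup>2 - (t k)\<^sup>2 * (norm (s k))\<^sup>2
      + ((1 + 2 * gbar) / (1 - 2 * labar)) * (t k)\<^sup>2 * (norm (s k))\<^sup>2"
    using inexact_proj_dist_le[OF phi step \<open>x k \<in> C\<close> \<open>y \<in> C\<close>, of gbar labar]
      gam[of k] th[of k] la[of k] thbar labar
    by (simp add: power_mult_distrib)
  with subgradient_step_dist_le[OF s_sub, of "t k" k y] t_pos[of k]
  show "(norm (x (Suc k) - y))\<^sup>2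
      \<le> (norm (x k - y))\<^sup>2 + ((1 + 2 * gbar) / (1 - 2 * labar)) * (t k)\<^sup>2 * (norm (s k))\<^sup>2
         - 2 * t k * (f (x k) - f y - eps k)"
    by linarith
qed

end
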